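(* Let $p$ be a prime and $\alpha$ a positive integer. For $l\in\mathbb{N}$, $n\in\mathbb{N}$, $r\in\mathbb{Z}$ let $$T_l(n,r)=\frac{l!\,p^l}{\lfloor n/p^{\alpha-1}\rfloor!}\sum_{k\equiv r\ (\mathrm{mod}\ p^{\alpha})}\binom nk(-1)^k\binom{(k-r)/p^{\alpha}}l.$$ Let $l\in\mathbb{N}$, $n\in\mathbb{Z}^+$ and $r\in\mathbb{Z}$. Then $$T_l(n-1,r)-T_l(n-1,r-1)=\begin{cases}T_l(n,r)&\text{if } p^{\alpha-1}\nmid n,\\ \frac n{p^{\alpha-1}}T_l(n,r)&\text{otherwise}.\end{cases}$$ If $l>0$, then also $$T_l(n,r)+\frac r{p^{\alpha-1}}T_{l-1}(n,r+p^{\alpha})=\begin{cases}-T_{l-1}(n-1,r+p^{\alpha}-1)&\text{if } p^{\alpha-1}\mid n,\\ -\frac n{p^{\alpha-1}}T_{l-1}(n-1,r+p^{\alpha}-1)&\text{otherwise}.\end{cases}$$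
   Context: The sum runs over all integers $k\equiv r\pmod{p^\alpha}$ with $\binom nk=0$ unless $0\le k\le n$; $\binom xl=x(x-1)\cdots(x-l+1)/l!$. *)

theory Defs
  imports Complex_Main "HOL-Number_Theory.Cong"
begin

text \<open>T_l(n,r) for prime p and exponent alpha; the sum ranges over 0 \<le> k \<le> n with
  k congruent to r mod p^alpha (other binomials vanish). The quotient (k-r)/p^alpha is an
  integer, computed exactly with div.\<close>
definition T :: "nat \<Rightarrow> nat \<Rightarrow> nat \<Rightarrow> nat \<Rightarrow> int \<Rightarrow> real" where
  "T p \<alpha> l n r =
     (fact l * real p ^ l / fact (n div p ^ (\<alpha> - 1))) *
     (\<Sum>k\<in>{k\<in>{0..n}. [int k = r] (mod int p ^ \<alpha>)}.
        real (n choose k) * (-1) ^ k * (real_of_int ((int k - r) div int p ^ \<alpha>) gchoose l))"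

end

theory Submission
  imports Defs
begin

text \<open>Up to the factor \<open>l! p^l / \<lfloor>n/p^(\<alpha>-1)\<rfloor>!\<close>, \<open>T\<^sub>l(n,r)\<close> is the alternating binomial sum
  \<open>\<Sum>\<^sub>k (n choose k) (-1)^k g(k)\<close> of the function \<open>g(k) = ((k - r)/p^\<alpha> choose l)\<close> supported on
  the residue class of \<open>r\<close>. Pascal's rule for \<open>n choose k\<close> writes the sum for \<open>n\<close> as a
  difference of sums for \<open>n - 1\<close>, and shifting \<open>k\<close> by one shifts \<open>r\<close> by one; this is the first
  identity. For the second, \<open>(l + 1) (x choose l + 1) = x (x - 1 choose l)\<close> with \<open>p^\<alpha> x = k - r\<close>
  turns \<open>(l + 1) p^\<alpha> g(k)\<close> into \<open>(k - r)\<close> times the summand for \<open>l\<close> and \<open>r + p^\<alpha>\<close>, and the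
  factor \<open>k\<close> is absorbed by \<open>k (n choose k) = n (n - 1 choose k - 1)\<close>. In both cases the
  normalising factorial changes by \<open>n/p^(\<alpha>-1)\<close> exactly when \<open>p^(\<alpha>-1)\<close> divides \<open>n\<close>.\<close>

definition alternating_binomial_sum :: "nat \<Rightarrow> (nat \<Rightarrow> 'a::comm_ring_1) \<Rightarrow> 'a" where
  "alternating_binomial_sum n f = (\<Sum>k\<le>n. of_nat (n choose k) * (-1) ^ k * f k)"

lemma alternating_binomial_sum_mult_left:
  "alternating_binomial_sum n (\<lambda>k. c * f k) = c * alternating_binomial_sum n f"
  unfolding alternating_binomial_sum_def by (simp add: sum_distrib_left mult_ac)

lemma alternating_binomial_sum_diff:
  "alternating_binomial_sum n (\<lambda>k. f k - g k) =
     alternating_binomial_sum n f - alternating_binomial_sum n g"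
  unfolding alternating_binomial_sum_def by (simp add: sum_subtractf algebra_simps)

lemma alternating_binomial_sum_Suc:
  "alternating_binomial_sum (Suc n) f =
     alternating_binomial_sum n f - alternating_binomial_sum n (\<lambda>k. f (Suc k))"
proof -
  have pascal: "of_nat (Suc n choose Suc k) * (-1) ^ Suc k * f (Suc k) =
      of_nat (n choose Suc k) * (-1) ^ Suc k * f (Suc k) - of_nat (n choose k) * (-1) ^ k * f (Suc k)"
    for k by (simp add: algebra_simps)
  have "alternating_binomial_sum (Suc n) f =
      f 0 + (\<Sum>k\<le>n. of_nat (Suc n choose Suc k) * (-1) ^ Suc k * f (Suc k))"
    unfolding alternating_binomial_sum_def by (subst sum.atMost_Suc_shift) simp
  also have "\<dots> = (f 0 + (\<Sum>k\<le>n. of_nat (n choose Suc k) * (-1) ^ Suc k * f (Suc k)))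
      - alternating_binomial_sum n (\<lambda>k. f (Suc k))"
    unfolding pascal alternating_binomial_sum_def by (simp only: sum_subtractf add_diff_eq)
  also have "f 0 + (\<Sum>k\<le>n. of_nat (n choose Suc k) * (-1) ^ Suc k * f (Suc k)) =
      (\<Sum>k\<le>Suc n. of_nat (n choose k) * (-1) ^ k * f k)"
    by (subst sum.atMost_Suc_shift) simp
  also have "\<dots> = alternating_binomial_sum n f"
    unfolding alternating_binomial_sum_def by (simp add: binomial_eq_0)
  finally show ?thesis .
qed

lemma alternating_binomial_sum_times_index:
  "alternating_binomial_sum (Suc n) (\<lambda>k. of_nat k * f k) =
     - of_nat (Suc n) * alternating_binomial_sum n (\<lambda>k. f (Suc k))"
proof -
  have absorb:
    "of_nat (Suc k) * of_nat (Suc n choose Suc k) = (of_nat (Suc n) * of_nat (n choose k) :: 'a)" for k by (metis Suc_times_binomial of_nat_mult)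
  have "of_nat (Suc n choose Suc k) * (-1) ^ Suc k * (of_nat (Suc k) * f (Suc k)) =
      - of_nat (Suc n) * (of_nat (n choose k) * (-1) ^ k * f (Suc k) :: 'a)" for k
  proof -
    have "of_nat (Suc n choose Suc k) * (-1) ^ Suc k * (of_nat (Suc k) * f (Suc k)) =
        - (of_nat (Suc k) * of_nat (Suc n choose Suc k)) * ((-1) ^ k * f (Suc k) :: 'a)"
      by (simp only: power_Suc) (simp add: algebra_simps del: binomial_Suc_Suc of_nat_Suc)
    also have "\<dots> = - (of_nat (Suc n) * of_nat (n choose k)) * ((-1) ^ k * f (Suc k))"
      by (simp only: absorb)
    finally show ?thesis by (simp add: algebra_simps)
  qed
  then show ?thesis
    unfolding alternating_binomial_sum_def
    by (simp only: sum.atMost_Suc_shift sum_distrib_left) simp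
qed

definition class_gchoose :: "int \<Rightarrow> nat \<Rightarrow> int \<Rightarrow> nat \<Rightarrow> real" where
  "class_gchoose q l r k =
     (if [int k = r] (mod q) then real_of_int ((int k - r) div q) gchoose l else 0)"

lemma class_gchoose_Suc: "class_gchoose q l r (Suc k) = class_gchoose q l (r - 1) k"
proof -
  have "[int (Suc k) = r] (mod q) \<longleftrightarrow> [int k = r - 1] (mod q)"
    by (simp add: cong_iff_dvd_diff algebra_simps)
  moreover have "int (Suc k) - r = int k - (r - 1)" by simp
  ultimately show ?thesis unfolding class_gchoose_def by (simp only:)
qed

lemma class_gchoose_absorption:
  "of_int q * of_nat (Suc l) * class_gchoose q (Suc l) r k =
     (of_nat k - of_int r) * class_gchoose q l (r + q) k"
proof -
  have shift: "[int k = r + q] (mod q) \<longleftrightarrow> [int k = r] (mod q)"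
    by (simp add: cong_def)
  show ?thesis
  proof (cases "[int k = r] (mod q)")
    case True
    then obtain x where x: "int k - r = q * x"
      by (auto simp: cong_iff_dvd_diff elim!: dvdE)
    show ?thesis
    proof (cases "q = 0")
      case False
      have "(int k - r) div q = x" "(int k - (r + q)) div q = x - 1"
        using x False by (simp_all add: algebra_simps)
      moreover have "real k - real_of_int r = real_of_int q * real_of_int x"
        using arg_cong[OF x, of real_of_int] by simp
      ultimately show ?thesis
        using True shift gbinomial_absorption[of l "real_of_int x"]
        by (simp add: class_gchoose_def)
    qed (use x in simp)
  next
    case False
    with shift show ?thesis by (simp add: class_gchoose_def)
  qed
qed

lemma alternating_binomial_sum_class_gchoose_Suc:
  "alternating_binomial_sum (Suc n) (class_gchoose q l r) =
     alternating_binomial_sum n (class_gchoose q l r) -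
     alternating_binomial_sum n (class_gchoose q l (r - 1))"
  by (simp add: alternating_binomial_sum_Suc class_gchoose_Suc)

lemma alternating_binomial_sum_class_gchoose_absorption:
  "of_int q * of_nat (Suc l) * alternating_binomial_sum (Suc n) (class_gchoose q (Suc l) r) =
     - of_nat (Suc n) * alternating_binomial_sum n (class_gchoose q l (r + q - 1)) -
     of_int r * alternating_binomial_sum (Suc n) (class_gchoose q l (r + q))"
proof -
  let ?g = "class_gchoose q l (r + q)"
  have "of_int q * of_nat (Suc l) * alternating_binomial_sum (Suc n) (class_gchoose q (Suc l) r) =
      alternating_binomial_sum (Suc n) (\<lambda>k. of_int q * of_nat (Suc l) * class_gchoose q (Suc l) r k)"
    by (simp only: alternating_binomial_sum_mult_left)
  also have "\<dots> = alternating_binomial_sum (Suc n) (\<lambda>k. (of_nat k - of_int r) * ?g k)"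
    by (simp only: class_gchoose_absorption)
  also have "\<dots> = alternating_binomial_sum (Suc n) (\<lambda>k. of_nat k * ?g k) -
      of_int r * alternating_binomial_sum (Suc n) ?g"
    by (simp only: left_diff_distrib alternating_binomial_sum_diff alternating_binomial_sum_mult_left)
  also have "alternating_binomial_sum (Suc n) (\<lambda>k. of_nat k * ?g k) =
      - of_nat (Suc n) * alternating_binomial_sum n (class_gchoose q l (r + q - 1))"
    by (simp add: alternating_binomial_sum_times_index class_gchoose_Suc)
  finally show ?thesis .
qed

lemma T_eq_alternating_binomial_sum:
  "T p \<alpha> l n r = fact l * real p ^ l / fact (n div p ^ (\<alpha> - 1)) *
     alternating_binomial_sum n (class_gchoose (int p ^ \<alpha>) l r)"
proof -
  have "(\<Sum>k\<in>{k\<in>{0..n}. [int k = r] (mod int p ^ \<alpha>)}.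
          real (n choose k) * (-1) ^ k * (real_of_int ((int k - r) div int p ^ \<alpha>) gchoose l)) =
      alternating_binomial_sum n (class_gchoose (int p ^ \<alpha>) l r)"
    unfolding alternating_binomial_sum_def class_gchoose_def
    by (subst sum.inter_filter) (auto simp: atLeast0AtMost intro!: sum.cong)
  then show ?thesis unfolding T_def by simp
qed

lemma fact_Suc_div:
  assumes "m > 0"
  shows "(fact (Suc n div m) :: real) =
    (if m dvd Suc n then real (Suc n) / real m else 1) * fact (n div m)"
proof (cases "m dvd Suc n")
  case True
  have "Suc n div m = Suc (n div m)"
    using True assms by (simp add: div_Suc dvd_eq_mod_eq_0)
  moreover have "real (Suc n div m) = real (Suc n) / real m"
    using True by (simp only: real_of_nat_div)
  ultimately show ?thesis using True by (metis fact_Suc of_nat_fact)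
next
  case False
  then show ?thesis using assms by (simp add: div_Suc dvd_eq_mod_eq_0)
qed

lemma T_pascal:
  "T p \<alpha> l n r - T p \<alpha> l n (r - 1) =
     fact (Suc n div p ^ (\<alpha> - 1)) / fact (n div p ^ (\<alpha> - 1)) * T p \<alpha> l (Suc n) r"
  by (simp add: T_eq_alternating_binomial_sum alternating_binomial_sum_class_gchoose_Suc
      field_simps)

lemma T_absorption:
  assumes "p > 0" and "\<alpha> > 0"
  shows "T p \<alpha> (Suc l) (Suc n) r +
      real_of_int r / real (p ^ (\<alpha> - 1)) * T p \<alpha> l (Suc n) (r + int p ^ \<alpha>) =
    - (real (Suc n) / real (p ^ (\<alpha> - 1))) *
      (fact (n div p ^ (\<alpha> - 1)) / fact (Suc n div p ^ (\<alpha> - 1))) *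
      T p \<alpha> l n (r + int p ^ \<alpha> - 1)"
proof -
  define m where "m = p ^ (\<alpha> - 1)"
  define q where "q = int p ^ \<alpha>"
  define c where "c = fact l * real p ^ l"
  define A where "A = alternating_binomial_sum (Suc n) (class_gchoose q (Suc l) r)"
  define B where "B = alternating_binomial_sum n (class_gchoose q l (r + q - 1))"
  define C where "C = alternating_binomial_sum (Suc n) (class_gchoose q l (r + q))"
  have "m > 0" using assms(1) by (simp add: m_def)
  have "real_of_int q = real p * real m"
    using assms(2) by (cases \<alpha>) (simp_all add: q_def m_def)
  then have key: "real p * real (Suc l) * A + real_of_int r / real m * C = - real (Suc n) / real m * B"
    using alternating_binomial_sum_class_gchoose_absorption[of q l n r] \<open>m > 0\<close>
    unfolding A_def B_def C_def by (simp add: field_simps)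
  have "T p \<alpha> (Suc l) (Suc n) r + real_of_int r / real m * T p \<alpha> l (Suc n) (r + q) =
      c / fact (Suc n div m) * (real p * real (Suc l) * A + real_of_int r / real m * C)"
    by (simp add: T_eq_alternating_binomial_sum c_def A_def C_def q_def m_def field_simps)
  also have "\<dots> = - (real (Suc n) / real m) * (fact (n div m) / fact (Suc n div m)) *
      (c / fact (n div m) * B)"
    unfolding key using \<open>m > 0\<close> by (simp add: field_simps)
  also have "c / fact (n div m) * B = T p \<alpha> l n (r + q - 1)"
    by (simp add: T_eq_alternating_binomial_sum c_def B_def q_def m_def)
  finally show ?thesis by (simp only: m_def q_def)
qed

theorem lemma2p2:
  fixes p \<alpha> l n :: nat and r :: int
  assumes "prime p" and "\<alpha> > 0" and "n > 0"
  shows "(T p \<alpha> l (n - 1) r - T p \<alpha> l (n - 1) (r - 1) =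
           (if \<not> p ^ (\<alpha> - 1) dvd n then T p \<alpha> l n r
            else real n / real (p ^ (\<alpha> - 1)) * T p \<alpha> l n r)) \<and>
         (l > 0 \<longrightarrow> 
         T p \<alpha> l n r + real_of_int r / real (p ^ (\<alpha> - 1)) * T p \<alpha> (l - 1) n (r + int p ^ \<alpha>) =
           (if p ^ (\<alpha> - 1) dvd n then - T p \<alpha> (l - 1) (n - 1) (r + int p ^ \<alpha> - 1)
            else - (real n / real (p ^ (\<alpha> - 1))) * T p \<alpha> (l - 1) (n - 1) (r + int p ^ \<alpha> - 1)))"
proof -
  have "p > 0" using assms(1) prime_gt_0_nat by blast
  define m where "m = p ^ (\<alpha> - 1)"
  have "m > 0" using \<open>p > 0\<close> by (simp add: m_def)
  obtain n' where n: "n = Suc n'" using assms(3) gr0_implies_Suc by blast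
  have fact_n: "fact (n div m) = (if m dvd n then real n / real m else 1) * (fact (n' div m) :: real)"
    using fact_Suc_div[OF \<open>m > 0\<close>, of n'] by (simp only: n)
  have "T p \<alpha> l n' r - T p \<alpha> l n' (r - 1) = fact (n div m) / fact (n' div m) * T p \<alpha> l n r"
    using T_pascal[of p \<alpha> l n' r] by (simp only: m_def n)
  then have "T p \<alpha> l n' r - T p \<alpha> l n' (r - 1) =
      (if m dvd n then real n / real m else 1) * T p \<alpha> l n r"
    by (simp add: fact_n)
  moreover have "T p \<alpha> l n r + real_of_int r / real m * T p \<alpha> (l - 1) n (r + int p ^ \<alpha>) =
      (if m dvd n then - T p \<alpha> (l - 1) n' (r + int p ^ \<alpha> - 1)
       else - (real n / real m) * T p \<alpha> (l - 1) n' (r + int p ^ \<alpha> - 1))" if "l > 0"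
  proof -
    obtain j where j: "l = Suc j" using \<open>l > 0\<close> gr0_implies_Suc by blast
    have "T p \<alpha> l n r + real_of_int r / real m * T p \<alpha> (l - 1) n (r + int p ^ \<alpha>) =
        - (real n / real m) * (fact (n' div m) / fact (n div m)) * T p \<alpha> (l - 1) n' (r + int p ^ \<alpha> - 1)"
      using T_absorption[OF \<open>p > 0\<close> assms(2), of j n' r] by (simp only: m_def n j diff_Suc_1)
    then show ?thesis
      using \<open>m > 0\<close> assms(3) by (simp add: fact_n)
  qed
  ultimately show ?thesis by (simp add: m_def n)
qed

end
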